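(* Let $N$ be a positive integer and let $1\le r<s\le N$ be integers. Then there exists $n_0$ such that $\widehat{T}_{r,N}(n)\ge \widehat{T}_{s,N}(n)$ for all integers $n\ge n_0$.
   Context: A partition $\lambda=(\lambda_0,\dots,\lambda_k)$ is a non-increasing finite sequence of positive integers, with size $|\lambda|=\sum_j\lambda_j$. For positive integers $r,N$, let $T_{r,N}(\lambda)$ be the number of indices $j$ with $\lambda_j\equiv r\pmod N$ (parts counted with multiplicity), and for a positive integer $n$ let $\widehat{T}_{r,N}(n)=\sum_{|\lambda|=n}T_{r,N}(\lambda)$, the sum over all partitions of $n$. *)

theory Defs
  imports Main
begin

definition is_partition :: "nat list \<Rightarrow> bool" where
  "is_partition xs \<longleftrightarrow> sorted_wrt (\<ge>) xs \<and> (\<forall>x\<in>set xs. 0 < x)"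

definition partitions_of :: "nat \<Rightarrow> nat list set" where
  "partitions_of n = {xs. is_partition xs \<and> sum_list xs = n}"

definition T :: "nat \<Rightarrow> nat \<Rightarrow> nat list \<Rightarrow> nat" where
  "T r N xs = length (filter (\<lambda>x. x mod N = r mod N) xs)"

definition T_hat :: "nat \<Rightarrow> nat \<Rightarrow> nat \<Rightarrow> nat" where
  "T_hat r N n = (\<Sum>xs\<in>partitions_of n. T r N xs)"

end

theory Submission
  imports Defs "HOL-Library.Multiset"
begin

text \<open>Count parts of each size separately. For \<open>1 \<le> k \<le> k'\<close>, the total number of parts
  equal to \<open>k'\<close> in all partitions of \<open>n\<close> is at most the total number of parts equal to \<open>k\<close>:
  a partition with a marked index \<open>1 \<le> j \<le>\<close> (multiplicity of \<open>k'\<close>) is sent injectively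
  to the partition obtained by replacing \<open>j\<close> parts \<open>k'\<close> by \<open>j\<close> parts \<open>k\<close> and
  \<open>j (k' - k)\<close> parts \<open>1\<close>, again marked at \<open>j \<le>\<close> (multiplicity of \<open>k\<close>).
  If \<open>1 \<le> r < s \<le> N\<close>, then \<open>k \<mapsto> k - (s - r)\<close> maps the positive integers
  \<open>\<equiv> s (mod N)\<close> injectively into the positive integers \<open>\<equiv> r (mod N)\<close> and decreases
  each of them, so summing gives \<open>T_hat s N n \<le> T_hat r N n\<close> for every \<open>n\<close>.\<close>

definition part_multisets :: "nat \<Rightarrow> nat multiset set" where
  "part_multisets n = {M. (\<forall>x\<in>#M. 0 < x) \<and> sum_mset M = n}"

lemma part_multisets_iff:
  "M \<in> part_multisets n \<longleftrightarrow> (\<forall>x\<in>#M. 0 < x) \<and> sum_mset M = n"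
  by (simp add: part_multisets_def)

lemma partitions_of_iff:
  "xs \<in> partitions_of n \<longleftrightarrow> sorted_wrt (\<ge>) xs \<and> (\<forall>x\<in>set xs. 0 < x) \<and> sum_list xs = n"
  by (simp add: partitions_of_def is_partition_def)

lemma bij_betw_mset_partitions_of: "bij_betw mset (partitions_of n) (part_multisets n)"
proof (rule bij_betw_byWitness[where f' = "\<lambda>M. rev (sorted_list_of_multiset M)"])
  show "\<forall>xs\<in>partitions_of n. rev (sorted_list_of_multiset (mset xs)) = xs"
  proof
    fix xs assume "xs \<in> partitions_of n"
    then have "sorted (rev xs)" by (simp add: partitions_of_iff sorted_wrt_rev)
    then have "sort xs = rev xs" by (simp add: properties_for_sort)
    then show "rev (sorted_list_of_multiset (mset xs)) = xs" by simp
  qed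
qed (auto simp: partitions_of_iff part_multisets_iff sorted_wrt_rev sum_mset_sum_list
          simp flip: sum_mset_sum_list)

lemma finite_partitions_of: "finite (partitions_of n)"
proof (rule finite_subset)
  show "partitions_of n \<subseteq> {xs. set xs \<subseteq> {0..n} \<and> length xs \<le> n}"
  proof safe
    fix xs assume "xs \<in> partitions_of n"
    then have pos: "\<forall>x\<in>set xs. 0 < x" and sum: "sum_list xs = n"
      by (auto simp: partitions_of_iff)
    show "x \<in> {0..n}" if "x \<in> set xs" for x
      using member_le_sum_list[OF that] sum by simp
    have "length xs \<le> sum_list xs"
      using pos by (induction xs) auto
    then show "length xs \<le> n" using sum by simp
  qed
qed (rule finite_lists_length_le[OF finite_atLeastAtMost])

lemma finite_part_multisets: "finite (part_multisets n)"
  using bij_betw_finite[OF bij_betw_mset_partitions_of] finite_partitions_of by blast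

definition part_count :: "nat \<Rightarrow> nat \<Rightarrow> nat" where
  "part_count n k = (\<Sum>xs\<in>partitions_of n. count_list xs k)"

lemma part_count_eq_sum_part_multisets:
  "part_count n k = (\<Sum>M\<in>part_multisets n. count M k)"
  unfolding part_count_def
  by (simp add: sum.reindex_bij_betw[OF bij_betw_mset_partitions_of, symmetric] count_mset)

lemma replace_parts_in_part_multisets:
  assumes M: "M \<in> part_multisets n" and j: "j \<le> count M k'" and k: "1 \<le> k" "k \<le> k'"
  shows "M - replicate_mset j k' + replicate_mset j k + replicate_mset (j * (k' - k)) 1
           \<in> part_multisets n"
proof -
  obtain D where D: "M = replicate_mset j k' + D"
    using j by (metis count_le_replicate_mset_subset_eq mset_subset_eq_exists_conv)
  have "j * k + j * (k' - k) = j * k'"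
    using k by (simp flip: add_mult_distrib2)
  then show ?thesis
    using M k by (auto simp: D part_multisets_iff)
qed

lemma part_count_antimono:
  assumes "1 \<le> k" "k \<le> k'"
  shows "part_count n k' \<le> part_count n k"
proof -
  define Q where "Q = part_multisets n"
  define marked where "marked k = Sigma Q (\<lambda>M. {1..count M k})" for k
  have card_marked: "card (marked k) = (\<Sum>M\<in>Q. count M k)" for k
    using finite_part_multisets by (simp add: marked_def Q_def card_SigmaI)
  define h where "h = (\<lambda>(M, j). (M - replicate_mset j k' + replicate_mset j k
                                   + replicate_mset (j * (k' - k)) 1, j))"
  have "inj_on h (marked k')"
  proof (rule inj_onI)
    fix a b assume "a \<in> marked k'" "b \<in> marked k'" and eq: "h a = h b"
    moreover obtain M1 j M2 j2 where ab: "a = (M1, j)" "b = (M2, j2)" by fastforce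
    ultimately have "replicate_mset j k' \<subseteq># M1" "replicate_mset j k' \<subseteq># M2" and "j2 = j"
      by (auto simp: ab marked_def h_def count_le_replicate_mset_subset_eq)
    moreover have "M1 - replicate_mset j k' = M2 - replicate_mset j k'"
      using eq ab \<open>j2 = j\<close> by (simp add: h_def)
    ultimately show "a = b" using ab by (metis subset_mset.diff_add)
  qed
  moreover have "h ` marked k' \<subseteq> marked k"
    using replace_parts_in_part_multisets assms by (auto simp: marked_def h_def Q_def)
  ultimately have "card (marked k') \<le> card (marked k)"
    using finite_part_multisets by (intro card_inj_on_le) (auto simp: marked_def Q_def)
  then show ?thesis
    by (simp add: card_marked Q_def part_count_eq_sum_part_multisets)
qed

lemma T_eq_sum_count_list:
  assumes "xs \<in> partitions_of n"
  shows "T r N xs = (\<Sum>k\<in>{k\<in>{1..n}. k mod N = r mod N}. count_list xs k)"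
    (is "_ = (\<Sum>k\<in>?K. _)")
proof -
  let ?P = "\<lambda>x. x mod N = r mod N"
  have "set (filter ?P xs) \<subseteq> ?K"
    using assms member_le_sum_list[of _ xs] by (auto simp: partitions_of_iff Suc_le_eq)
  then have "T r N xs = (\<Sum>k\<in>?K. count_list (filter ?P xs) k)"
    by (simp add: T_def sum_count_set)
  also have "\<dots> = (\<Sum>k\<in>?K. count_list xs k)"
  proof (rule sum.cong)
    fix k assume "k \<in> ?K"
    then show "count_list (filter ?P xs) k = count_list xs k"
      by (induction xs) auto
  qed simp
  finally show ?thesis .
qed

lemma T_hat_eq_sum_part_count:
  "T_hat r N n = (\<Sum>k\<in>{k\<in>{1..n}. k mod N = r mod N}. part_count n k)"
  unfolding T_hat_def part_count_def
  by (simp add: T_eq_sum_count_list cong: sum.cong) (rule sum.swap)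

lemma shift_residue_class:
  fixes k N r s :: nat
  assumes "0 < r" "r < s" "s \<le> N" "0 < k" "k mod N = s mod N"
  shows "s \<le> k" and "(k - (s - r)) mod N = r mod N"
proof -
  show "s \<le> k"
  proof (cases "s = N")
    case True
    then show ?thesis using assms by (metis dvd_imp_le mod_0_imp_dvd mod_self)
  next
    case False
    then show ?thesis using assms by (metis le_neq_implies_less mod_less mod_less_eq_dividend)
  qed
  then have "N dvd k - s"
    using assms(5) by (simp add: mod_eq_dvd_iff_nat)
  moreover have "k - (s - r) = (k - s) + r"
    using \<open>s \<le> k\<close> assms(2) by simp
  ultimately show "(k - (s - r)) mod N = r mod N"
    by (metis dvd_imp_mod_0 mod_add_left_eq plus_nat.add_0)
qed

lemma T_hat_le_of_residue_lt:
  assumes "0 < r" "r < s" "s \<le> N"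
  shows "T_hat s N n \<le> T_hat r N n"
proof -
  let ?K = "\<lambda>r. {k\<in>{1..n}. k mod N = r mod N}"
  let ?shift = "\<lambda>k. k - (s - r)"
  have s_le: "s \<le> k" and shift_mod: "?shift k mod N = r mod N" if "k \<in> ?K s" for k
    using shift_residue_class[OF assms] that by auto
  have "T_hat s N n \<le> (\<Sum>k\<in>?K s. part_count n (?shift k))"
    unfolding T_hat_eq_sum_part_count
  proof (intro sum_mono part_count_antimono)
    fix k assume "k \<in> ?K s"
    with s_le[of k] assms show "1 \<le> ?shift k" "?shift k \<le> k" by auto
  qed
  also have "\<dots> = (\<Sum>k\<in>?shift ` ?K s. part_count n k)"
  proof -
    have "inj_on ?shift (?K s)"
    proof (rule inj_onI)
      fix a b assume "a \<in> ?K s" "b \<in> ?K s" "?shift a = ?shift b"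
      with s_le[of a] s_le[of b] assms(2) show "a = b" by linarith
    qed
    then show ?thesis by (simp add: sum.reindex)
  qed
  also have "\<dots> \<le> (\<Sum>k\<in>?K r. part_count n k)"
  proof (rule sum_mono2)
    show "?shift ` ?K s \<subseteq> ?K r"
    proof
      fix x assume "x \<in> ?shift ` ?K s"
      then obtain k where "k \<in> ?K s" "x = ?shift k" by blast
      with s_le[of k] shift_mod[of k] assms show "x \<in> ?K r" by auto
    qed
  qed auto
  also have "\<dots> = T_hat r N n"
    unfolding T_hat_eq_sum_part_count ..
  finally show ?thesis .
qed

theorem mainTheorem2:
  fixes N r s :: nat
  assumes "0 < N" and "1 \<le> r" and "r < s" and "s \<le> N"
  shows "\<exists>n0. \<forall>n\<ge>n0. T_hat r N n \<ge> T_hat s N n"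
  using T_hat_le_of_residue_lt assms by auto

end
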